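(* Let $n\ge0$ be an integer, $\kappa\ge0$, and suppose each arc travel time function has the form $t_a(\mathbf v)=\sum_{m=0}^nb_{am}\big(\sum_{e\in\mathcal A}d_{aem}v_e\big)^m$ with constants $b_{am}\ge0$, $d_{aem}\ge0$. If $\mathbf f^0\in\mathbf F$ is a PRUE flow, then $(1+\kappa)\mathbf f^0$ is a $\sigma$-MSatUE flow in $\mathbf F_{1+\kappa}$ (i.e. for the demands $(1+\kappa)Q_w$), where $\sigma=(1+\kappa)^n-1$. In particular, when $n=1$, $\sigma=\kappa$.
   Context: Let $G=(\mathcal N,\mathcal A)$ be a finite directed graph and $\mathcal W$ a finite set of OD pairs; each $w$ has demand $Q_w>0$ and a finite set $\mathcal P_w$ of paths from its origin to its destination; $\mathcal P=\bigcup_w\mathcal P_w$; $\delta^p_a=1$ if arc $a$ lies on path $p$, else $0$. $\mathbf F=\{\mathbf f\ge0:\sum_{p\in\mathcal P_w}f_p=Q_w\ \forall w\}$, $\mathbf F_{1+\kappa}=\{(1+\kappa)\mathbf f:\mathbf f\in\mathbf F\}$. Arc flow $v_a=\sum_p\delta^p_af_p$; path travel time $c_p(\mathbf f)=\sum_a\delta^p_at_a(\mathbf v)$. A feasible flow (in the relevant set) is a PRUE if for all $w$, $p\in\mathcal P_w$: $f_p>0\implies c_p(\mathbf f)=\min_{p'\in\mathcal P_w}c_{p'}(\mathbf f)$; for $\sigma\ge0$ it is a $\sigma$-MSatUE if $f_p>0\implies c_p(\mathbf f)\le(1+\sigma)\min_{p'\in\mathcal P_w}c_{p'}(\mathbf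 f)$. *)

theory Defs
  imports Complex_Main
begin

text \<open>Nodes have type 'n, an arc is an ordered pair of nodes,
  an OD pair is a pair (origin, destination), and a path is a list of nodes
  whose consecutive pairs are arcs.\<close>

definition path_arcs :: "'n list \<Rightarrow> ('n \<times> 'n) set" where
  "path_arcs p = set (zip p (tl p))"

definition network ::
  "'n set \<Rightarrow> ('n \<times> 'n) set \<Rightarrow> ('n \<times> 'n) set \<Rightarrow> (('n \<times> 'n) \<Rightarrow> real)
     \<Rightarrow> (('n \<times> 'n) \<Rightarrow> 'n list set) \<Rightarrow> bool" where
  "network N A W Q Pw \<longleftrightarrow>
     finite N \<and> finite A \<and> A \<subseteq> N \<times> N \<and> finite W \<and> W \<subseteq> N \<times> N \<and>
     (\<forall>w\<in>W. Q w > 0) \<and>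
     (\<forall>w\<in>W. finite (Pw w) \<and>
        (\<forall>p\<in>Pw w. p \<noteq> [] \<and> hd p = fst w \<and> last p = snd w \<and> path_arcs p \<subseteq> A))"

definition all_paths :: "('n \<times> 'n) set \<Rightarrow> (('n \<times> 'n) \<Rightarrow> 'n list set) \<Rightarrow> 'n list set" where
  "all_paths W Pw = (\<Union>w\<in>W. Pw w)"

definition feasible ::
  "('n \<times> 'n) set \<Rightarrow> (('n \<times> 'n) \<Rightarrow> real) \<Rightarrow> (('n \<times> 'n) \<Rightarrow> 'n list set)
     \<Rightarrow> ('n list \<Rightarrow> real) set" where
  "feasible W Q Pw = {f. (\<forall>p\<in>all_paths W Pw. f p \<ge> 0) \<and> (\<forall>w\<in>W. (\<Sum>p\<in>Pw w. f p) = Q w)}"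

definition arc_flow ::
  "('n \<times> 'n) set \<Rightarrow> (('n \<times> 'n) \<Rightarrow> 'n list set) \<Rightarrow> ('n list \<Rightarrow> real) \<Rightarrow> ('n \<times> 'n) \<Rightarrow> real" where
  "arc_flow W Pw f a = (\<Sum>p\<in>all_paths W Pw. (if a \<in> path_arcs p then 1 else 0) * f p)"

definition path_cost ::
  "('n \<times> 'n) set \<Rightarrow> ('n \<times> 'n) set \<Rightarrow> (('n \<times> 'n) \<Rightarrow> 'n list set)
     \<Rightarrow> (('n \<times> 'n) \<Rightarrow> (('n \<times> 'n) \<Rightarrow> real) \<Rightarrow> real) \<Rightarrow> ('n list \<Rightarrow> real) \<Rightarrow> 'n list \<Rightarrow> real" where
  "path_cost A W Pw t f p = (\<Sum>a\<in>A. (if a \<in> path_arcs p then 1 else 0) * t a (arc_flow W Pw f))"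

definition MSatUE where
  "MSatUE A W Q Pw t \<sigma> f \<longleftrightarrow> f \<in> feasible W Q Pw \<and>
     (\<forall>w\<in>W. \<forall>p\<in>Pw w. f p > 0 \<longrightarrow>
        path_cost A W Pw t f p \<le> (1 + \<sigma>) * (MIN p'\<in>Pw w. path_cost A W Pw t f p'))"

definition PRUE where
  "PRUE A W Q Pw t f \<longleftrightarrow> f \<in> feasible W Q Pw \<and>
     (\<forall>w\<in>W. \<forall>p\<in>Pw w. f p > 0 \<longrightarrow>
        path_cost A W Pw t f p = (MIN p'\<in>Pw w. path_cost A W Pw t f p'))"

end

theory Submission
  imports Defs
begin

text \<open>Scaling all path flows by \<open>c = 1 + \<kappa> \<ge> 1\<close> scales every arc flow by \<open>c\<close>, so each
  monomial of degree \<open>m \<le> n\<close> in a travel time grows by the factor \<open>c ^ m \<in> [1, c ^ n]\<close>.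
  Hence every path cost at least keeps its old value and grows at most by \<open>c ^ n\<close>.
  A used path was shortest before scaling, so its new cost is at most \<open>c ^ n\<close> times the
  old minimum, which in turn is at most the new minimum.\<close>

lemma sum_powers_le_sum_powers_scaled:
  fixes b x :: "nat \<Rightarrow> 'a::linordered_semidom"
  assumes "c \<ge> 1" and "\<And>m. m \<le> n \<Longrightarrow> b m \<ge> 0" and "\<And>m. m \<le> n \<Longrightarrow> x m \<ge> 0"
  shows "(\<Sum>m\<le>n. b m * x m ^ m) \<le> (\<Sum>m\<le>n. b m * (c * x m) ^ m)"
proof (rule sum_mono)
  fix m assume "m \<in> {..n}"
  with assms have "x m \<le> c * x m"
    using mult_right_mono[of 1 c "x m"] by simp
  with assms \<open>m \<in> {..n}\<close> show "b m * x m ^ m \<le> b m * (c * x m) ^ m"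
    by (intro mult_left_mono power_mono) auto
qed

lemma sum_powers_scaled_le_power_mult:
  fixes b x :: "nat \<Rightarrow> 'a::linordered_semidom"
  assumes "c \<ge> 1" and "\<And>m. m \<le> n \<Longrightarrow> b m \<ge> 0" and "\<And>m. m \<le> n \<Longrightarrow> x m \<ge> 0"
  shows "(\<Sum>m\<le>n. b m * (c * x m) ^ m) \<le> c ^ n * (\<Sum>m\<le>n. b m * x m ^ m)"
  unfolding sum_distrib_left
proof (rule sum_mono)
  fix m assume "m \<in> {..n}"
  with assms have "c ^ m * (b m * x m ^ m) \<le> c ^ n * (b m * x m ^ m)"
    by (intro mult_right_mono power_increasing) auto
  then show "b m * (c * x m) ^ m \<le> c ^ n * (b m * x m ^ m)"
    by (simp add: power_mult_distrib ac_simps)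
qed

lemma polynomial_travel_time_scaled_bounds:
  fixes t :: "'e \<Rightarrow> ('e \<Rightarrow> real) \<Rightarrow> real" and v :: "'e \<Rightarrow> real"
  assumes t_form: "\<And>v. t a v = (\<Sum>m\<le>n. b m * (\<Sum>e\<in>A. d e m * v e) ^ m)"
    and b_nonneg: "\<And>m. m \<le> n \<Longrightarrow> b m \<ge> 0"
    and d_nonneg: "\<And>e m. e \<in> A \<Longrightarrow> m \<le> n \<Longrightarrow> d e m \<ge> 0"
    and v_nonneg: "\<And>e. e \<in> A \<Longrightarrow> v e \<ge> 0"
    and "c \<ge> 1"
  shows "t a v \<le> t a (\<lambda>e. c * v e)" and "t a (\<lambda>e. c * v e) \<le> c ^ n * t a v"
proof -
  define x where "x m = (\<Sum>e\<in>A. d e m * v e)" for m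
  have x_nonneg: "x m \<ge> 0" if "m \<le> n" for m
    unfolding x_def using d_nonneg v_nonneg that by (intro sum_nonneg) auto
  have "t a v = (\<Sum>m\<le>n. b m * x m ^ m)"
    by (simp add: t_form x_def)
  moreover have "t a (\<lambda>e. c * v e) = (\<Sum>m\<le>n. b m * (c * x m) ^ m)"
    by (simp add: t_form x_def sum_distrib_left ac_simps)
  ultimately show "t a v \<le> t a (\<lambda>e. c * v e)" and "t a (\<lambda>e. c * v e) \<le> c ^ n * t a v"
    using sum_powers_le_sum_powers_scaled[OF \<open>c \<ge> 1\<close> b_nonneg x_nonneg]
      sum_powers_scaled_le_power_mult[OF \<open>c \<ge> 1\<close> b_nonneg x_nonneg] by simp_all
qed

lemma arc_flow_scale: "arc_flow W Pw (\<lambda>p. c * f p) = (\<lambda>e. c * arc_flow W Pw f e)"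
  by (rule ext) (simp add: arc_flow_def sum_distrib_left ac_simps)

lemma arc_flow_nonneg: "f \<in> feasible W Q Pw \<Longrightarrow> arc_flow W Pw f e \<ge> 0"
  unfolding arc_flow_def feasible_def by (intro sum_nonneg) auto

lemma feasible_scale:
  assumes "f \<in> feasible W Q Pw" and "c \<ge> 0"
  shows "(\<lambda>p. c * f p) \<in> feasible W (\<lambda>w. c * Q w) Pw"
  using assms by (simp add: feasible_def sum_distrib_left[symmetric])

lemma path_cost_mono:
  assumes "\<And>a. a \<in> A \<Longrightarrow> t a (arc_flow W Pw f) \<le> t a (arc_flow W Pw g)"
  shows "path_cost A W Pw t f p \<le> path_cost A W Pw t g p"
  unfolding path_cost_def using assms by (intro sum_mono) auto

lemma path_cost_le_mult:
  assumes "\<And>a. a \<in> A \<Longrightarrow> t a (arc_flow W Pw g) \<le> K * t a (arc_flow W Pw f)"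
  shows "path_cost A W Pw t g p \<le> K * path_cost A W Pw t f p"
  unfolding path_cost_def sum_distrib_left using assms by (intro sum_mono) auto

lemma MSatUE_if_PRUE_cost_bounds:
  assumes fin: "\<forall>w\<in>W. finite (Pw w)"
    and prue: "PRUE A W Q Pw t f0"
    and feas: "g \<in> feasible W Q' Pw"
    and support: "\<And>p. g p > 0 \<Longrightarrow> f0 p > 0"
    and cost_ge: "\<And>p. path_cost A W Pw t f0 p \<le> path_cost A W Pw t g p"
    and cost_le: "\<And>p. path_cost A W Pw t g p \<le> (1 + \<sigma>) * path_cost A W Pw t f0 p"
    and "1 + \<sigma> \<ge> 0"
  shows "MSatUE A W Q' Pw t \<sigma> g"
  unfolding MSatUE_def
proof (intro conjI feas ballI impI)
  fix w p assume "w \<in> W" "p \<in> Pw w" "g p > 0"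
  let ?min = "\<lambda>f. MIN p'\<in>Pw w. path_cost A W Pw t f p'"
  have "path_cost A W Pw t f0 p = ?min f0"
    using prue support \<open>w \<in> W\<close> \<open>p \<in> Pw w\<close> \<open>g p > 0\<close> by (simp add: PRUE_def)
  also have "\<dots> \<le> ?min g"
    using fin \<open>w \<in> W\<close> \<open>p \<in> Pw w\<close> cost_ge by (auto intro!: Min.boundedI intro: order.trans[OF Min_le])
  finally have "(1 + \<sigma>) * path_cost A W Pw t f0 p \<le> (1 + \<sigma>) * ?min g"
    using \<open>1 + \<sigma> \<ge> 0\<close> by (rule mult_left_mono)
  with cost_le show "path_cost A W Pw t g p \<le> (1 + \<sigma>) * ?min g"
    by (rule order.trans)
qed

theorem lemma8:
  fixes N :: "'n set" and A W :: "('n \<times> 'n) set" and Q :: "('n \<times> 'n) \<Rightarrow> real"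
    and Pw :: "('n \<times> 'n) \<Rightarrow> 'n list set"
    and t :: "('n \<times> 'n) \<Rightarrow> (('n \<times> 'n) \<Rightarrow> real) \<Rightarrow> real"
    and n :: nat and \<kappa> :: real
    and b :: "('n \<times> 'n) \<Rightarrow> nat \<Rightarrow> real" and d :: "('n \<times> 'n) \<Rightarrow> ('n \<times> 'n) \<Rightarrow> nat \<Rightarrow> real"
    and f0 :: "'n list \<Rightarrow> real"
  assumes net: "network N A W Q Pw"
    and kappa: "\<kappa> \<ge> 0"
    and b_nonneg: "\<forall>a\<in>A. \<forall>m\<le>n. b a m \<ge> 0"
    and d_nonneg: "\<forall>a\<in>A. \<forall>e\<in>A. \<forall>m\<le>n. d a e m \<ge> 0"
    and t_form: "\<forall>a\<in>A. \<forall>v. t a v = (\<Sum>m\<le>n. b a m * (\<Sum>e\<in>A. d a e m * v e) ^ m)"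
    and prue: "f0 \<in> feasible W Q Pw" "PRUE A W Q Pw t f0"
  shows "(\<lambda>p. (1 + \<kappa>) * f0 p) \<in> (\<lambda>f. (\<lambda>p. (1 + \<kappa>) * f p)) ` feasible W Q Pw
       \<and> MSatUE A W (\<lambda>w. (1 + \<kappa>) * Q w) Pw t ((1 + \<kappa>) ^ n - 1) (\<lambda>p. (1 + \<kappa>) * f0 p)"
proof
  show "(\<lambda>p. (1 + \<kappa>) * f0 p) \<in> (\<lambda>f. (\<lambda>p. (1 + \<kappa>) * f p)) ` feasible W Q Pw"
    using prue(1) by blast
  let ?c = "1 + \<kappa>" and ?v0 = "arc_flow W Pw f0"
  have time_bounds: "t a ?v0 \<le> t a (\<lambda>e. ?c * ?v0 e)" "t a (\<lambda>e. ?c * ?v0 e) \<le> ?c ^ n * t a ?v0"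
    if "a \<in> A" for a
    using polynomial_travel_time_scaled_bounds[where b = "b a" and d = "d a" and c = ?c]
      that t_form b_nonneg d_nonneg arc_flow_nonneg[OF prue(1)] kappa by simp_all
  show "MSatUE A W (\<lambda>w. ?c * Q w) Pw t (?c ^ n - 1) (\<lambda>p. ?c * f0 p)"
  proof (rule MSatUE_if_PRUE_cost_bounds[OF _ prue(2)])
    show "\<forall>w\<in>W. finite (Pw w)" using net by (simp add: network_def)
    show "(\<lambda>p. ?c * f0 p) \<in> feasible W (\<lambda>w. ?c * Q w) Pw"
      using kappa by (intro feasible_scale prue(1)) simp
  qed (use kappa time_bounds in \<open>auto simp: arc_flow_scale zero_less_mult_iff
        intro: path_cost_mono path_cost_le_mult\<close>)
qed

end
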